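(* Let $\mathbb{K}$ be any field and $G=UU_n(\mathbb{K})$ the group of $n\times n$ upper triangular unipotent matrices over $\mathbb{K}$. If $x=(x_{ij})\in G$ satisfies $\prod_{i=1}^{n-1}x_{i,i+1}\ne 0$, then the centralizer $C_G(x)$ is abelian. *)

theory Defs
  imports Main
begin

text \<open>n x n matrices over a field, represented as functions nat => nat => 'a,
  indices 1..n; entries outside the range are required to be 0 so that
  the representation is canonical.\<close>

definition mat_mult :: "nat \<Rightarrow> (nat \<Rightarrow> nat \<Rightarrow> 'a::field) \<Rightarrow> (nat \<Rightarrow> nat \<Rightarrow> 'a) \<Rightarrow> (nat \<Rightarrow> nat \<Rightarrow> 'a)" where
  "mat_mult n A B = (\<lambda>i j. if i \<in> {1..n} \<and> j \<in> {1..n} then (\<Sum>k=1..n. A i k * B k j) else 0)"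

definition UU :: "nat \<Rightarrow> (nat \<Rightarrow> nat \<Rightarrow> 'a::field) set" where
  "UU n = {A. (\<forall>i j. (i \<notin> {1..n} \<or> j \<notin> {1..n}) \<longrightarrow> A i j = 0)
             \<and> (\<forall>i\<in>{1..n}. A i i = 1)
             \<and> (\<forall>i\<in>{1..n}. \<forall>j\<in>{1..n}. j < i \<longrightarrow> A i j = 0)}"

definition centralizer_UU :: "nat \<Rightarrow> (nat \<Rightarrow> nat \<Rightarrow> 'a::field) \<Rightarrow> (nat \<Rightarrow> nat \<Rightarrow> 'a) set" where
  "centralizer_UU n x = {g \<in> UU n. mat_mult n g x = mat_mult n x g}"

end

theory Submission imports Defs begin

text \<open>Write \<open>x = 1 + N\<close>. The hypothesis says that the strictly upper triangular \<open>N\<close> has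
  no zero entry on its superdiagonal. Then the kernel of \<open>N\<close> is spanned by \<open>e\<^sub>1\<close>, so a
  matrix commuting with \<open>N\<close> is determined column by column by its first row. The first rows of
  \<open>1, N, \<dots>, N\<^sup>n\<^sup>-\<^sup>1\<close> form a triangular basis, hence every element of the centralizer
  is a polynomial in \<open>N\<close>, and everything commuting with \<open>N\<close> commutes with it.\<close>

definition supported :: "nat \<Rightarrow> (nat \<Rightarrow> nat \<Rightarrow> 'a::field) \<Rightarrow> bool" where
  "supported n A \<longleftrightarrow> (\<forall>i j. (i \<notin> {1..n} \<or> j \<notin> {1..n}) \<longrightarrow> A i j = 0)"

definition one_mat :: "nat \<Rightarrow> nat \<Rightarrow> nat \<Rightarrow> 'a::field" where
  "one_mat n = (\<lambda>i j. if i = j \<and> i \<in> {1..n} then 1 else 0)"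

definition mat_lincomb :: "nat \<Rightarrow> (nat \<Rightarrow> 'a::field) \<Rightarrow> (nat \<Rightarrow> nat \<Rightarrow> nat \<Rightarrow> 'a) \<Rightarrow> nat \<Rightarrow> nat \<Rightarrow> 'a" where
  "mat_lincomb K c F = (\<lambda>i j. \<Sum>k<K. c k * F k i j)"

primrec mat_pow :: "nat \<Rightarrow> (nat \<Rightarrow> nat \<Rightarrow> 'a::field) \<Rightarrow> nat \<Rightarrow> nat \<Rightarrow> nat \<Rightarrow> 'a" where
  "mat_pow n N 0 = one_mat n"
| "mat_pow n N (Suc k) = mat_mult n N (mat_pow n N k)"

definition strictly_upper :: "(nat \<Rightarrow> nat \<Rightarrow> 'a::field) \<Rightarrow> bool" where
  "strictly_upper N \<longleftrightarrow> (\<forall>i j. j \<le> i \<longrightarrow> N i j = 0)"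

lemma sum_eq_single_nonzero:
  "finite S \<Longrightarrow> l \<in> S \<Longrightarrow> (\<And>k. k \<in> S \<Longrightarrow> k \<noteq> l \<Longrightarrow> f k = 0) \<Longrightarrow> sum f S = f l"
  by (simp add: sum.remove sum.neutral)

lemma mat_mult_assoc: "mat_mult n (mat_mult n A B) C = mat_mult n A (mat_mult n B C)"
proof (intro ext)
  fix i j
  have "(\<Sum>k=1..n. (\<Sum>l=1..n. A i l * B l k) * C k j) = (\<Sum>l=1..n. A i l * (\<Sum>k=1..n. B l k * C k j))"
    by (simp add: sum_distrib_left sum_distrib_right mult.assoc) (rule sum.swap)
  then show "mat_mult n (mat_mult n A B) C i j = mat_mult n A (mat_mult n B C) i j"
    unfolding mat_mult_def by (auto intro!: sum.cong)
qed

lemma supported_mat_mult: "supported n (mat_mult n A B)"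
  unfolding supported_def mat_mult_def by auto

lemma supported_one_mat: "supported n (one_mat n)"
  unfolding supported_def one_mat_def by auto

lemma mat_mult_one_left: "supported n A \<Longrightarrow> mat_mult n (one_mat n) A = A"
  unfolding supported_def by (intro ext) (auto simp: mat_mult_def one_mat_def sum_eq_single_nonzero)

lemma mat_mult_one_right: "supported n A \<Longrightarrow> mat_mult n A (one_mat n) = A"
  unfolding supported_def by (intro ext) (auto simp: mat_mult_def one_mat_def sum_eq_single_nonzero)

lemma mat_mult_diff_left:
  "mat_mult n (\<lambda>i j. A i j - B i j) C = (\<lambda>i j. mat_mult n A C i j - mat_mult n B C i j)"
  unfolding mat_mult_def by (intro ext) (auto simp: left_diff_distrib sum_subtractf)

lemma mat_mult_diff_right:
  "mat_mult n C (\<lambda>i j. A i j - B i j) = (\<lambda>i j. mat_mult n C A i j - mat_mult n C B i j)"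
  unfolding mat_mult_def by (intro ext) (auto simp: right_diff_distrib sum_subtractf)

lemma mat_mult_lincomb_left:
  "mat_mult n (mat_lincomb K c F) B = mat_lincomb K c (\<lambda>k. mat_mult n (F k) B)"
  unfolding mat_lincomb_def mat_mult_def
  by (intro ext) (auto simp: sum_distrib_left sum_distrib_right mult.assoc intro: sum.swap)

lemma mat_mult_lincomb_right:
  "mat_mult n B (mat_lincomb K c F) = mat_lincomb K c (\<lambda>k. mat_mult n B (F k))"
  unfolding mat_lincomb_def mat_mult_def
  by (intro ext) (auto simp: sum_distrib_left sum_distrib_right mult.assoc mult.left_commute intro: sum.swap)

lemma commute_mat_lincomb:
  "(\<And>k. mat_mult n B (F k) = mat_mult n (F k) B) \<Longrightarrow>
    mat_mult n B (mat_lincomb K c F) = mat_mult n (mat_lincomb K c F) B"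
  by (simp add: mat_mult_lincomb_left mat_mult_lincomb_right)

lemma supported_mat_lincomb: "(\<And>k. supported n (F k)) \<Longrightarrow> supported n (mat_lincomb K c F)"
  unfolding supported_def mat_lincomb_def by simp

lemma supported_mat_pow: "supported n (mat_pow n N k)"
  by (cases k) (simp_all add: supported_one_mat supported_mat_mult)

lemma commute_mat_pow:
  assumes "supported n B" and "mat_mult n B N = mat_mult n N B"
  shows "mat_mult n B (mat_pow n N k) = mat_mult n (mat_pow n N k) B"
proof (induction k)
  case 0
  show ?case using assms(1) by (simp add: mat_mult_one_left mat_mult_one_right)
next
  case (Suc k)
  have "mat_mult n B (mat_pow n N (Suc k)) = mat_mult n (mat_mult n N B) (mat_pow n N k)"
    using assms(2) by (simp add: mat_mult_assoc[symmetric])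
  also have "\<dots> = mat_mult n (mat_pow n N (Suc k)) B"
    using Suc.IH by (simp add: mat_mult_assoc)
  finally show ?case .
qed

lemma mat_pow_below_superdiag:
  assumes "strictly_upper N" and "j < i + k"
  shows "mat_pow n N k i j = 0"
  using assms(2)
proof (induction k arbitrary: i)
  case 0
  then show ?case by (simp add: one_mat_def)
next
  case (Suc k)
  have "N i l * mat_pow n N k l j = 0" for l
    using assms(1) Suc by (cases "l \<le> i") (auto simp: strictly_upper_def)
  then have "(\<Sum>l = 1..n. N i l * mat_pow n N k l j) = 0"
    by (simp add: sum.neutral)
  then show ?case by (simp add: mat_mult_def)
qed

lemma mat_pow_superdiag:
  assumes "strictly_upper N" and "1 \<le> i" and "i + k \<le> n"
  shows "mat_pow n N k i (i + k) = (\<Prod>m = i..<i + k. N m (m + 1))"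
  using assms(2,3)
proof (induction k arbitrary: i)
  case 0
  then show ?case by (simp add: one_mat_def)
next
  case (Suc k)
  have "N i l * mat_pow n N k l (i + Suc k) = 0" if "l \<noteq> i + 1" for l
    using assms(1) mat_pow_below_superdiag[OF assms(1), of "i + Suc k" l k n] that
    by (cases "l \<le> i") (auto simp: strictly_upper_def)
  then have "mat_pow n N (Suc k) i (i + Suc k) = N i (i + 1) * mat_pow n N k (i + 1) (i + 1 + k)"
    using Suc.prems by (simp add: mat_mult_def sum_eq_single_nonzero[of _ "i + 1"])
  also have "\<dots> = N i (i + 1) * (\<Prod>m = i + 1..<i + 1 + k. N m (m + 1))"
    using Suc by (subst Suc.IH) auto
  also have "\<dots> = (\<Prod>m = i..<i + Suc k. N m (m + 1))"
    by (simp add: prod.atLeast_Suc_lessThan)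
  finally show ?case .
qed

lemma triangular_system_solvable:
  fixes p :: "nat \<Rightarrow> nat \<Rightarrow> 'a::field"
  assumes upper: "\<And>k j. j < k \<Longrightarrow> p k j = 0" and diag: "\<And>k. k < m \<Longrightarrow> p k k \<noteq> 0"
  shows "\<exists>c. \<forall>j<m. (\<Sum>k<m. c k * p k j) = b j"
  using diag
proof (induction m)
  case 0
  show ?case by simp
next
  case (Suc m)
  then obtain c where c: "\<forall>j<m. (\<Sum>k<m. c k * p k j) = b j"
    by auto
  define c' where "c' = c(m := (b m - (\<Sum>k<m. c k * p k m)) / p m m)"
  have old: "(\<Sum>k<m. c' k * p k j) = (\<Sum>k<m. c k * p k j)" for j
    by (rule sum.cong) (simp_all add: c'_def)
  have "(\<Sum>k<Suc m. c' k * p k j) = b j" if "j < Suc m" for j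
  proof (cases "j = m")
    case True
    then show ?thesis using Suc.prems by (simp add: old) (simp add: c'_def)
  next
    case False
    then show ?thesis using that c upper[of j m] by (simp add: old)
  qed
  then show ?case by blast
qed

lemma mat_pow_first_rows_span:
  assumes "strictly_upper N" and "\<forall>i\<in>{1..<n}. N i (i + 1) \<noteq> 0" and "supported n A"
  obtains c where "\<forall>j. mat_lincomb n c (mat_pow n N) 1 j = A 1 j"
proof -
  have below: "mat_pow n N k 1 (j + 1) = 0" if "j < k" for j k
    using mat_pow_below_superdiag[OF assms(1)] that by simp
  have diag: "mat_pow n N k 1 (k + 1) \<noteq> 0" if "k < n" for k
  proof -
    have "mat_pow n N k 1 (1 + k) = (\<Prod>m = 1..<1 + k. N m (m + 1))"
      using that by (intro mat_pow_superdiag[OF assms(1)]) auto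
    moreover have "\<forall>m\<in>{1..<1 + k}. N m (m + 1) \<noteq> 0"
      using assms(2) that by auto
    ultimately show ?thesis by (simp add: add.commute)
  qed
  obtain c where c: "\<forall>j<n. (\<Sum>k<n. c k * mat_pow n N k 1 (j + 1)) = A 1 (j + 1)"
    using triangular_system_solvable[of "\<lambda>k j. mat_pow n N k 1 (j + 1)" n "\<lambda>j. A 1 (j + 1)",
        OF below diag]
    by blast
  have "mat_lincomb n c (mat_pow n N) 1 j = A 1 j" for j
  proof (cases "j \<in> {1..n}")
    case True
    then have "j - 1 < n" and "j - 1 + 1 = j"
      by auto
    then show ?thesis
      using c unfolding mat_lincomb_def by metis
  next
    case False
    then show ?thesis
      using assms(3) supported_mat_lincomb[of n "mat_pow n N" n c, OF supported_mat_pow]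
      by (simp add: supported_def)
  qed
  then show ?thesis using that by blast
qed

text \<open>Read from the bottom up, the equations of \<open>N v = 0\<close> force
  \<open>v\<^sub>n, v\<^sub>n\<^sub>-\<^sub>1, \<dots>, v\<^sub>2\<close> to vanish in turn.\<close>

lemma strictly_upper_kernel:
  fixes v :: "nat \<Rightarrow> 'a::field"
  assumes "strictly_upper N" and "\<forall>i\<in>{1..<n}. N i (i + 1) \<noteq> 0"
    and "\<forall>l>n. v l = 0" and "\<forall>i\<in>{1..n}. (\<Sum>l = 1..n. N i l * v l) = 0"
    and "2 \<le> l"
  shows "v l = 0"
  using assms(5)
proof (induction l rule: measure_induct_rule[of "\<lambda>l. n - l"])
  case (less l)
  show ?case
  proof (cases "l \<le> n")
    case True
    have later: "v l' = 0" if "l' \<le> n" and "l < l'" for l'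
      using that less.prems by (intro less.IH) auto
    have "N (l - 1) l' * v l' = 0" if "l' \<in> {1..n}" and "l' \<noteq> l" for l'
    proof (cases "l' \<le> l - 1")
      case True
      then show ?thesis using assms(1) by (simp add: strictly_upper_def)
    next
      case False
      then show ?thesis using later[of l'] that by simp
    qed
    then have "(\<Sum>l' = 1..n. N (l - 1) l' * v l') = N (l - 1) l * v l"
      using True less.prems by (intro sum_eq_single_nonzero) auto
    moreover have "l - 1 \<in> {1..<n}" and "l - 1 + 1 = l"
      using True less.prems by auto
    then have "N (l - 1) l \<noteq> 0"
      using assms(2) by metis
    moreover have "l - 1 \<in> {1..n}"
      using True less.prems by auto
    ultimately show ?thesis using assms(4) by simp
  qed (use assms(3) in simp)
qed

text \<open>Induction on the column \<open>j\<close>: once the earlier columns of \<open>B\<close> vanish, so does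
  column \<open>j\<close> of \<open>B N = N B\<close>, i.e. column \<open>j\<close> of \<open>B\<close> lies in the kernel of \<open>N\<close>.\<close>

lemma commuting_zero_first_row:
  assumes "strictly_upper N" and "\<forall>i\<in>{1..<n}. N i (i + 1) \<noteq> 0"
    and "supported n B" and "mat_mult n N B = mat_mult n B N" and "\<forall>j. B 1 j = 0"
  shows "B i j = 0"
proof (induction j arbitrary: i rule: less_induct)
  case (less j)
  show ?case
  proof (cases "j \<in> {1..n} \<and> i \<ge> 2")
    case True
    have "B i' l * N l j = 0" for i' l
      using assms(1) less by (cases "j \<le> l") (auto simp: strictly_upper_def)
    then have BN: "mat_mult n B N i' j = 0" for i'
      by (simp add: mat_mult_def sum.neutral)
    have "(\<Sum>l = 1..n. N i' l * B l j) = 0" if "i' \<in> {1..n}" for i'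
      using BN[of i'] True that unfolding assms(4)[symmetric] by (simp add: mat_mult_def)
    then show ?thesis
      using strictly_upper_kernel[OF assms(1,2), of "\<lambda>l. B l j"] assms(3) True
      by (simp add: supported_def)
  next
    case False
    then show ?thesis using assms(3,5) by (cases "i = 1") (auto simp: supported_def)
  qed
qed

lemma commuting_is_polynomial:
  assumes "strictly_upper N" and "\<forall>i\<in>{1..<n}. N i (i + 1) \<noteq> 0" and "supported n N"
    and "supported n A" and "mat_mult n A N = mat_mult n N A"
  obtains c where "A = mat_lincomb n c (mat_pow n N)"
proof -
  obtain c where c: "\<forall>j. mat_lincomb n c (mat_pow n N) 1 j = A 1 j"
    using mat_pow_first_rows_span[OF assms(1,2,4)] .
  let ?P = "mat_lincomb n c (mat_pow n N)"
  have "mat_mult n N ?P = mat_mult n ?P N"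
    using commute_mat_lincomb commute_mat_pow[OF assms(3)] by metis
  then have comm: "mat_mult n N (\<lambda>i j. A i j - ?P i j) = mat_mult n (\<lambda>i j. A i j - ?P i j) N"
    using assms(5) by (simp add: mat_mult_diff_left mat_mult_diff_right)
  have supp: "supported n (\<lambda>i j. A i j - ?P i j)"
    using assms(4) supported_mat_lincomb[OF supported_mat_pow] by (simp add: supported_def)
  have row1: "\<forall>j. A 1 j - ?P 1 j = 0"
    using c by simp
  have "A i j - ?P i j = 0" for i j
    by (rule commuting_zero_first_row[OF assms(1,2) supp comm row1])
  then have "A = ?P"
    by (simp add: fun_eq_iff)
  then show ?thesis by (rule that)
qed

lemma UU_supported: "A \<in> UU n \<Longrightarrow> supported n A"
  by (simp add: UU_def supported_def)

lemma UU_minus_one_strictly_upper: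
  assumes "x \<in> UU n"
  shows "strictly_upper (\<lambda>i j. x i j - one_mat n i j)"
proof -
  have "x i j = 0" if "j < i" for i j
    using assms that UU_supported[OF assms]
    by (cases "i \<in> {1..n} \<and> j \<in> {1..n}") (auto simp: UU_def supported_def)
  moreover have "x i i = one_mat n i i" for i
    using assms UU_supported[OF assms] by (auto simp: UU_def supported_def one_mat_def)
  ultimately show ?thesis
    by (auto simp: strictly_upper_def one_mat_def le_less)
qed

lemma commute_minus_one:
  assumes "supported n A" and "mat_mult n A x = mat_mult n x A"
  shows "mat_mult n A (\<lambda>i j. x i j - one_mat n i j) = mat_mult n (\<lambda>i j. x i j - one_mat n i j) A"
  using assms
  by (simp add: mat_mult_diff_left mat_mult_diff_right mat_mult_one_left mat_mult_one_right)

theorem theorem11p1: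
  fixes n :: nat and x :: "nat \<Rightarrow> nat \<Rightarrow> 'a::field"
  assumes "x \<in> UU n"
    and "(\<Prod>i=1..n-1. x i (i+1)) \<noteq> 0"
  shows "\<forall>g\<in>centralizer_UU n x. \<forall>h\<in>centralizer_UU n x. mat_mult n g h = mat_mult n h g"
proof (intro ballI)
  fix g h assume g: "g \<in> centralizer_UU n x" and h: "h \<in> centralizer_UU n x"
  define N where "N = (\<lambda>i j. x i j - one_mat n i j)"
  have "strictly_upper N"
    unfolding N_def using assms(1) by (rule UU_minus_one_strictly_upper)
  moreover have "\<forall>i\<in>{1..<n}. N i (i + 1) \<noteq> 0"
    using assms(2) by (auto simp: N_def one_mat_def)
  moreover have "supported n N"
    using UU_supported[OF assms(1)] by (simp add: supported_def N_def one_mat_def)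
  moreover have commutes_N: "supported n A \<and> mat_mult n A N = mat_mult n N A"
    if "A \<in> centralizer_UU n x" for A
    using that UU_supported commute_minus_one unfolding centralizer_UU_def N_def by blast
  ultimately obtain c where "g = mat_lincomb n c (mat_pow n N)"
    using commuting_is_polynomial g by blast
  then show "mat_mult n g h = mat_mult n h g"
    using commute_mat_lincomb commute_mat_pow commutes_N[OF h] by metis
qed

end
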